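(* Let $(X,d)$ be a compact metric space and $F$ a semiflow on $X$. For all $x,y\in X$, if $x\succcurlyeq_{\mathcal C} y$ then $x\succcurlyeq_{\mathcal S} y$. In particular $\mathcal R_{\mathcal C}\subset\mathcal R_{\mathcal S}$.
   Context: A semiflow on a metric space $(X,d)$ is a continuous map $F:[0,\infty)\times X\to X$, $(t,x)\mapsto F^t(x)$, with $F^0=\mathrm{id}$ and $F^{t+s}=F^t\circ F^s$ for all $t,s\ge0$. A curve is piecewise continuous if it is continuous except at finitely many points, at which one-sided limits exist. Conley chains: for $\varepsilon>0$, $T>0$, an $(\varepsilon,T)$-chain from $x$ to $y$ is a finite sequence $x=x_0,\dots,x_N=y$ in $X$ with times $t_i\ge T$ such that $d(F^{t_i}(x_i),x_{i+1})<\varepsilon$ for $i=0,\dots,N-1$. Write $x\succcurlyeq_{\mathcal C} y$ if for every $\varepsilon>0$ and $T>0$ there is an $(\varepsilon,T)$-chain from $x$ to $y$. Shadow chains: for $T\ge1$, a piecewise continuous $\gamma:[0,T]\to X$ is $\varepsilon$-close to $F$ if $d(\gamma(t+\tau),F^\tau(\gamma(t)))<\varepsilon$ for every $\tau\in[0,1]$ and $t\in[0,T-\tau]$. An $\varepsilon$-chain from $x$ to $y$ is such a $\gamma$ with $\gamma(0)=x$, $\gamma(T)=y$. Write $x\succcurlyeq_{\mathcal S} y$ if for every $\varepsilon>0$ there is an $\varepsilon$-chain from $x$ to $y$. For $\star\in\{\mathcal C,\mathcal S\}$: $x$ is $\star$-chain-recurrent if $x$ is a fixed point of $F$ or there is $y$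 with $x\succcurlyeq_\star y$ and $y\succcurlyeq_\star x$; $\mathcal R_\star$ denotes the set of $\star$-chain-recurrent points. *)

theory Defs
  imports "HOL-Analysis.Analysis"
begin

definition semiflow :: "'a::metric_space set \<Rightarrow> (real \<Rightarrow> 'a \<Rightarrow> 'a) \<Rightarrow> bool" where
  "semiflow X F \<longleftrightarrow>
     continuous_on ({0..} \<times> X) (\<lambda>(t, x). F t x) \<and>
     (\<forall>t\<ge>0. \<forall>x\<in>X. F t x \<in> X) \<and>
     (\<forall>x\<in>X. F 0 x = x) \<and>
     (\<forall>t\<ge>0. \<forall>s\<ge>0. \<forall>x\<in>X. F (t + s) x = F t (F s x))"

definition conley_chain ::
  "'a::metric_space set \<Rightarrow> (real \<Rightarrow> 'a \<Rightarrow> 'a) \<Rightarrow> real \<Rightarrow> real \<Rightarrow> 'a \<Rightarrow> 'a \<Rightarrow> bool" where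
  "conley_chain X F \<epsilon> T x y \<longleftrightarrow>
     (\<exists>N::nat. \<exists>xs::nat \<Rightarrow> 'a. \<exists>ts::nat \<Rightarrow> real.
        N \<ge> 1 \<and> xs 0 = x \<and> xs N = y \<and> (\<forall>i\<le>N. xs i \<in> X) \<and>
        (\<forall>i<N. ts i \<ge> T \<and> dist (F (ts i) (xs i)) (xs (Suc i)) < \<epsilon>))"

definition conley_rel :: "'a::metric_space set \<Rightarrow> (real \<Rightarrow> 'a \<Rightarrow> 'a) \<Rightarrow> 'a \<Rightarrow> 'a \<Rightarrow> bool" where
  "conley_rel X F x y \<longleftrightarrow> (\<forall>\<epsilon>>0. \<forall>T>0. conley_chain X F \<epsilon> T x y)"

definition piecewise_cont_curve :: "'a::metric_space set \<Rightarrow> real \<Rightarrow> (real \<Rightarrow> 'a) \<Rightarrow> bool" where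
  "piecewise_cont_curve X T \<gamma> \<longleftrightarrow>
     (\<forall>t\<in>{0..T}. \<gamma> t \<in> X) \<and>
     (\<exists>S. finite S \<and>
        (\<forall>t\<in>{0..T} - S. continuous (at t within {0..T}) \<gamma>) \<and>
        (\<forall>s\<in>S \<inter> {0..T}.
           (0 < s \<longrightarrow> (\<exists>l. (\<gamma> \<longlongrightarrow> l) (at_left s))) \<and>
           (s < T \<longrightarrow> (\<exists>l. (\<gamma> \<longlongrightarrow> l) (at_right s)))))"

definition eps_close :: "(real \<Rightarrow> 'a \<Rightarrow> 'a::metric_space) \<Rightarrow> real \<Rightarrow> real \<Rightarrow> (real \<Rightarrow> 'a) \<Rightarrow> bool" where
  "eps_close F \<epsilon> T \<gamma> \<longleftrightarrow>
     (\<forall>\<tau>\<in>{0..1}. \<forall>t\<in>{0..T - \<tau>}. dist (\<gamma> (t + \<tau>)) (F \<tau> (\<gamma> t)) < \<epsilon>)"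

definition shadow_chain ::
  "'a::metric_space set \<Rightarrow> (real \<Rightarrow> 'a \<Rightarrow> 'a) \<Rightarrow> real \<Rightarrow> 'a \<Rightarrow> 'a \<Rightarrow> bool" where
  "shadow_chain X F \<epsilon> x y \<longleftrightarrow>
     (\<exists>T \<gamma>. T \<ge> 1 \<and> piecewise_cont_curve X T \<gamma> \<and> eps_close F \<epsilon> T \<gamma> \<and>
            \<gamma> 0 = x \<and> \<gamma> T = y)"

definition shadow_rel :: "'a::metric_space set \<Rightarrow> (real \<Rightarrow> 'a \<Rightarrow> 'a) \<Rightarrow> 'a \<Rightarrow> 'a \<Rightarrow> bool" where
  "shadow_rel X F x y \<longleftrightarrow> (\<forall>\<epsilon>>0. shadow_chain X F \<epsilon> x y)"

definition fixed_point :: "(real \<Rightarrow> 'a \<Rightarrow> 'a) \<Rightarrow> 'a \<Rightarrow> bool" where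
  "fixed_point F x \<longleftrightarrow> (\<forall>t\<ge>0. F t x = x)"

definition chain_recurrent_set ::
  "'a set \<Rightarrow> (real \<Rightarrow> 'a \<Rightarrow> 'a) \<Rightarrow> ('a \<Rightarrow> 'a \<Rightarrow> bool) \<Rightarrow> 'a set" where
  "chain_recurrent_set X F R = {x\<in>X. fixed_point F x \<or> (\<exists>y\<in>X. R x y \<and> R y x)}"

end

theory Submission
  imports Defs
begin

text \<open>Given \<open>\<epsilon>\<close>, uniform continuity of \<open>(t, x) \<mapsto> F t x\<close> on the compact set \<open>[0,1] \<times> X\<close>
  yields \<open>\<delta>\<close> such that every \<open>F \<sigma>\<close> with \<open>\<sigma> \<in> [0,1]\<close> maps \<open>\<delta>\<close>-close points to \<open>\<epsilon>\<close>-close points.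
  A \<open>(\<delta>, 1)\<close>-chain \<open>x\<^sub>0, \<dots>, x\<^sub>N\<close> with times \<open>t\<^sub>i \<ge> 1\<close> becomes the curve that follows the
  orbit of \<open>x\<^sub>i\<close> for time \<open>t\<^sub>i\<close> and then jumps to \<open>x\<^sub>i\<^sub>+\<^sub>1\<close>. As every orbit piece lasts
  at least time 1, a window of length \<open>\<tau> \<le> 1\<close> meets at most one jump, and across it the
  error is \<open>dist (F \<sigma> (F t\<^sub>i x\<^sub>i)) (F \<sigma> x\<^sub>i\<^sub>+\<^sub>1) < \<epsilon>\<close>.\<close>

text \<open>Unlike \<open>piecewise_cont_curve\<close>, only local conditions are imposed (continuity at interior
  points, one-sided limits everywhere), so the notion is preserved by \<open>curve_append\<close> below.\<close>
definition piecewise_continuous :: "real \<Rightarrow> (real \<Rightarrow> 'a::topological_space) \<Rightarrow> bool" where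
  "piecewise_continuous T \<gamma> \<longleftrightarrow>
     (\<exists>S. finite S \<and> (\<forall>t\<in>{0<..<T} - S. isCont \<gamma> t)) \<and>
     (\<forall>s\<in>{0<..T}. \<exists>l. (\<gamma> \<longlongrightarrow> l) (at_left s)) \<and>
     (\<forall>s\<in>{0..<T}. \<exists>l. (\<gamma> \<longlongrightarrow> l) (at_right s))"

lemma piecewise_cont_curveI:
  assumes "\<forall>t\<in>{0..T}. \<gamma> t \<in> X" and "piecewise_continuous T \<gamma>"
  shows "piecewise_cont_curve X T \<gamma>"
proof -
  obtain S where "finite S" and cont: "\<forall>t\<in>{0<..<T} - S. isCont \<gamma> t"
    using assms(2) by (auto simp: piecewise_continuous_def)
  have "\<forall>t\<in>{0..T} - (S \<union> {0, T}). continuous (at t within {0..T}) \<gamma>"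
    using cont by (auto intro: continuous_at_imp_continuous_at_within)
  with \<open>finite S\<close> assms show ?thesis
    unfolding piecewise_cont_curve_def piecewise_continuous_def
    by (intro conjI exI[of _ "S \<union> {0, T}"]) auto
qed

lemma piecewise_continuous_if_continuous_on:
  assumes "continuous_on {0..T} \<gamma>"
  shows "piecewise_continuous T \<gamma>"
  unfolding piecewise_continuous_def
proof (intro conjI ballI exI[of _ "{}"])
  fix t assume "t \<in> {0<..<T} - {}"
  then show "isCont \<gamma> t"
    using continuous_on_interior[OF assms] by auto
next
  fix s :: real assume "s \<in> {0<..T}"
  then show "\<exists>l. (\<gamma> \<longlongrightarrow> l) (at_left s)"
    using continuous_on_Icc_at_leftD[OF continuous_on_subset[OF assms]] by fastforce
next
  fix s :: real assume "s \<in> {0..<T}"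
  then show "\<exists>l. (\<gamma> \<longlongrightarrow> l) (at_right s)"
    using continuous_on_Icc_at_rightD[OF continuous_on_subset[OF assms]] by fastforce
qed simp

lemma tendsto_at_left_shift:
  fixes g :: "real \<Rightarrow> 'a::topological_space"
  assumes "(g \<longlongrightarrow> l) (at_left s)"
  shows "((\<lambda>t. g (t - c)) \<longlongrightarrow> l) (at_left (s + c))"
proof -
  have "filterlim (\<lambda>t. t - c) (at_left s) (at_left (s + c))"
    by (rule filterlim_at_withinI) (auto intro!: tendsto_eq_intros simp: eventually_at_filter)
  from filterlim_compose[OF assms this] show ?thesis by (simp add: o_def)
qed

lemma tendsto_at_right_shift:
  fixes g :: "real \<Rightarrow> 'a::topological_space"
  assumes "(g \<longlongrightarrow> l) (at_right s)"
  shows "((\<lambda>t. g (t - c)) \<longlongrightarrow> l) (at_right (s + c))"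
proof -
  have "filterlim (\<lambda>t. t - c) (at_right s) (at_right (s + c))"
    by (rule filterlim_at_withinI) (auto intro!: tendsto_eq_intros simp: eventually_at_filter)
  from filterlim_compose[OF assms this] show ?thesis by (simp add: o_def)
qed

definition curve_append :: "real \<Rightarrow> (real \<Rightarrow> 'a) \<Rightarrow> (real \<Rightarrow> 'a) \<Rightarrow> real \<Rightarrow> 'a" where
  "curve_append a \<gamma>\<^sub>1 \<gamma>\<^sub>2 t = (if t < a then \<gamma>\<^sub>1 t else \<gamma>\<^sub>2 (t - a))"

lemma eventually_curve_append_left:
  assumes "t < a"
  shows "\<forall>\<^sub>F u in nhds t. curve_append a \<gamma>\<^sub>1 \<gamma>\<^sub>2 u = \<gamma>\<^sub>1 u"
  using eventually_nhds_in_open[of "{..<a}" t] assms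
  by (auto simp: curve_append_def elim: eventually_mono)

lemma eventually_curve_append_right:
  assumes "a < t"
  shows "\<forall>\<^sub>F u in nhds t. curve_append a \<gamma>\<^sub>1 \<gamma>\<^sub>2 u = \<gamma>\<^sub>2 (u - a)"
  using eventually_nhds_in_open[of "{a<..}" t] assms
  by (auto simp: curve_append_def elim: eventually_mono)

lemma isCont_curve_append_left:
  assumes "t < a" "isCont \<gamma>\<^sub>1 t"
  shows "isCont (curve_append a \<gamma>\<^sub>1 \<gamma>\<^sub>2) t"
  using assms(2) isCont_cong[OF eventually_curve_append_left[OF assms(1), of \<gamma>\<^sub>1 \<gamma>\<^sub>2]] by simp

lemma isCont_curve_append_right:
  assumes "a < t" "isCont \<gamma>\<^sub>2 (t - a)"
  shows "isCont (curve_append a \<gamma>\<^sub>1 \<gamma>\<^sub>2) t"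
proof -
  have "isCont (\<lambda>u. \<gamma>\<^sub>2 (u - a)) t"
    using assms(2) by (auto intro: isCont_o2[where f = "\<lambda>u. u - a"] continuous_intros)
  then show ?thesis
    using isCont_cong[OF eventually_curve_append_right[OF assms(1), of \<gamma>\<^sub>1 \<gamma>\<^sub>2]] by simp
qed

lemma tendsto_curve_append_at_left:
  assumes "s \<le> a" "(\<gamma>\<^sub>1 \<longlongrightarrow> l) (at_left s)"
  shows "(curve_append a \<gamma>\<^sub>1 \<gamma>\<^sub>2 \<longlongrightarrow> l) (at_left s)"
proof (rule Lim_transform_eventually[OF assms(2)])
  show "\<forall>\<^sub>F u in at_left s. \<gamma>\<^sub>1 u = curve_append a \<gamma>\<^sub>1 \<gamma>\<^sub>2 u"
    using assms(1) by (auto simp: eventually_at_filter curve_append_def)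
qed

lemma tendsto_curve_append_at_left':
  assumes "a < s" "(\<gamma>\<^sub>2 \<longlongrightarrow> l) (at_left (s - a))"
  shows "(curve_append a \<gamma>\<^sub>1 \<gamma>\<^sub>2 \<longlongrightarrow> l) (at_left s)"
proof (rule Lim_transform_eventually)
  show "((\<lambda>u. \<gamma>\<^sub>2 (u - a)) \<longlongrightarrow> l) (at_left s)"
    using tendsto_at_left_shift[OF assms(2), of a] by simp
  show "\<forall>\<^sub>F u in at_left s. \<gamma>\<^sub>2 (u - a) = curve_append a \<gamma>\<^sub>1 \<gamma>\<^sub>2 u"
    using assms(1) eventually_at_left_real[of a s] by (auto simp: curve_append_def elim: eventually_mono)
qed

lemma tendsto_curve_append_at_right:
  assumes "s < a" "(\<gamma>\<^sub>1 \<longlongrightarrow> l) (at_right s)"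
  shows "(curve_append a \<gamma>\<^sub>1 \<gamma>\<^sub>2 \<longlongrightarrow> l) (at_right s)"
proof (rule Lim_transform_eventually[OF assms(2)])
  show "\<forall>\<^sub>F u in at_right s. \<gamma>\<^sub>1 u = curve_append a \<gamma>\<^sub>1 \<gamma>\<^sub>2 u"
    using assms(1) eventually_at_right_real[of s a] by (auto simp: curve_append_def elim: eventually_mono)
qed

lemma tendsto_curve_append_at_right':
  assumes "a \<le> s" "(\<gamma>\<^sub>2 \<longlongrightarrow> l) (at_right (s - a))"
  shows "(curve_append a \<gamma>\<^sub>1 \<gamma>\<^sub>2 \<longlongrightarrow> l) (at_right s)"
proof (rule Lim_transform_eventually)
  show "((\<lambda>u. \<gamma>\<^sub>2 (u - a)) \<longlongrightarrow> l) (at_right s)"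
    using tendsto_at_right_shift[OF assms(2), of a] by simp
  show "\<forall>\<^sub>F u in at_right s. \<gamma>\<^sub>2 (u - a) = curve_append a \<gamma>\<^sub>1 \<gamma>\<^sub>2 u"
    using assms(1) by (auto simp: eventually_at_filter curve_append_def)
qed

lemma piecewise_continuous_curve_append:
  assumes "0 \<le> a" "0 \<le> b"
    and pc1: "piecewise_continuous a \<gamma>\<^sub>1" and pc2: "piecewise_continuous b \<gamma>\<^sub>2"
  shows "piecewise_continuous (a + b) (curve_append a \<gamma>\<^sub>1 \<gamma>\<^sub>2)"
proof -
  obtain S\<^sub>1 S\<^sub>2 where fin: "finite S\<^sub>1" "finite S\<^sub>2"
    and cont1: "\<forall>t\<in>{0<..<a} - S\<^sub>1. isCont \<gamma>\<^sub>1 t" and cont2: "\<forall>t\<in>{0<..<b} - S\<^sub>2. isCont \<gamma>\<^sub>2 t"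
    using pc1 pc2 by (auto simp: piecewise_continuous_def)
  have "isCont (curve_append a \<gamma>\<^sub>1 \<gamma>\<^sub>2) t"
    if "t \<in> {0<..<a + b} - (S\<^sub>1 \<union> {a} \<union> (\<lambda>s. s + a) ` S\<^sub>2)" for t
  proof (cases "t < a")
    case True
    then show ?thesis
      using that cont1 by (auto intro: isCont_curve_append_left)
  next
    case False
    then have "t - a \<in> {0<..<b} - S\<^sub>2"
      using that by (force simp: image_iff)
    then show ?thesis
      using that cont2 False by (auto intro: isCont_curve_append_right)
  qed
  moreover have "\<exists>l. (curve_append a \<gamma>\<^sub>1 \<gamma>\<^sub>2 \<longlongrightarrow> l) (at_left s)" if s: "s \<in> {0<..a + b}" for s
  proof (cases "s \<le> a")
    case True
    with s have "s \<in> {0<..a}"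
      by simp
    then obtain l where "(\<gamma>\<^sub>1 \<longlongrightarrow> l) (at_left s)"
      using pc1 unfolding piecewise_continuous_def by blast
    with True show ?thesis
      by (blast intro: tendsto_curve_append_at_left)
  next
    case False
    with s have "s - a \<in> {0<..b}"
      by simp
    then obtain l where "(\<gamma>\<^sub>2 \<longlongrightarrow> l) (at_left (s - a))"
      using pc2 unfolding piecewise_continuous_def by blast
    with False show ?thesis
      by (meson not_le tendsto_curve_append_at_left')
  qed
  moreover have "\<exists>l. (curve_append a \<gamma>\<^sub>1 \<gamma>\<^sub>2 \<longlongrightarrow> l) (at_right s)" if s: "s \<in> {0..<a + b}" for s
  proof (cases "s < a")
    case True
    with s have "s \<in> {0..<a}"
      by simp
    then obtain l where "(\<gamma>\<^sub>1 \<longlongrightarrow> l) (at_right s)"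
      using pc1 unfolding piecewise_continuous_def by blast
    with True show ?thesis
      by (blast intro: tendsto_curve_append_at_right)
  next
    case False
    with s have "s - a \<in> {0..<b}"
      by simp
    then obtain l where "(\<gamma>\<^sub>2 \<longlongrightarrow> l) (at_right (s - a))"
      using pc2 unfolding piecewise_continuous_def by blast
    with False show ?thesis
      by (meson not_less tendsto_curve_append_at_right')
  qed
  ultimately show ?thesis
    using fin unfolding piecewise_continuous_def
    by (intro conjI exI[of _ "S\<^sub>1 \<union> {a} \<union> (\<lambda>s. s + a) ` S\<^sub>2"]) auto
qed

lemma semiflow_continuous_on_orbit:
  assumes "semiflow X F" "x \<in> X"
  shows "continuous_on {0..} (\<lambda>t. F t x)"
proof -
  have "continuous_on ({0..} \<times> X) (\<lambda>(t, x). F t x)"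
    using assms(1) by (simp add: semiflow_def)
  then have "continuous_on {0..} ((\<lambda>(t, x). F t x) \<circ> (\<lambda>t. (t, x)))"
    using assms(2) by (intro continuous_on_compose continuous_intros) (auto elim: continuous_on_subset)
  then show ?thesis by (simp add: o_def)
qed

lemma semiflow_uniformly_equicontinuous:
  assumes "compact X" "semiflow X F" "0 < \<epsilon>"
  obtains \<delta> where "0 < \<delta>"
    "\<And>\<sigma> a b. \<sigma> \<in> {0..\<tau>} \<Longrightarrow> a \<in> X \<Longrightarrow> b \<in> X \<Longrightarrow> dist a b < \<delta> \<Longrightarrow> dist (F \<sigma> a) (F \<sigma> b) < \<epsilon>"
proof -
  have "continuous_on ({0..} \<times> X) (\<lambda>(t, x). F t x)"
    using assms(2) by (simp add: semiflow_def)
  then have "uniformly_continuous_on ({0..\<tau>} \<times> X) (\<lambda>(t, x). F t x)"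
    using assms(1) by (intro compact_uniformly_continuous compact_Times) (auto elim: continuous_on_subset)
  then obtain \<delta> where "0 < \<delta>" and \<delta>: "\<forall>p\<in>{0..\<tau>} \<times> X. \<forall>q\<in>{0..\<tau>} \<times> X.
      dist q p < \<delta> \<longrightarrow> dist ((\<lambda>(t, x). F t x) q) ((\<lambda>(t, x). F t x) p) < \<epsilon>"
    using assms(3) unfolding uniformly_continuous_on_def by blast
  show thesis
  proof (rule that[OF \<open>0 < \<delta>\<close>])
    fix \<sigma> a b assume "\<sigma> \<in> {0..\<tau>}" "a \<in> X" "b \<in> X" "dist a b < \<delta>"
    then show "dist (F \<sigma> a) (F \<sigma> b) < \<epsilon>"
      using \<delta>[rule_format, of "(\<sigma>, b)" "(\<sigma>, a)"] by (simp add: dist_Pair_Pair)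
  qed
qed

lemma eps_close_prepend_orbit:
  assumes sf: "semiflow X F" and "x \<in> X" "0 \<le> t\<^sub>0" "0 < \<epsilon>"
    and close: "eps_close F \<epsilon> T \<gamma>"
    and orbit_start: "\<And>\<sigma>. 0 \<le> \<sigma> \<Longrightarrow> \<sigma> < 1 \<Longrightarrow> \<sigma> \<le> T \<Longrightarrow> \<gamma> \<sigma> = F \<sigma> (\<gamma> 0)"
    and jump: "\<And>\<sigma>. \<sigma> \<in> {0..1} \<Longrightarrow> dist (F \<sigma> (F t\<^sub>0 x)) (F \<sigma> (\<gamma> 0)) < \<epsilon>"
  shows "eps_close F \<epsilon> (t\<^sub>0 + T) (curve_append t\<^sub>0 (\<lambda>t. F t x) \<gamma>)"
    (is "eps_close F \<epsilon> _ ?\<gamma>")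
  unfolding eps_close_def
proof (intro ballI)
  have F_add: "\<And>t s. 0 \<le> t \<Longrightarrow> 0 \<le> s \<Longrightarrow> F (t + s) x = F t (F s x)"
    using sf \<open>x \<in> X\<close> by (simp add: semiflow_def)
  fix \<tau> t assume \<tau>: "\<tau> \<in> {0..1}" and t: "t \<in> {0..t\<^sub>0 + T - \<tau>}"
  consider "t + \<tau> < t\<^sub>0" | "t\<^sub>0 \<le> t" | "t < t\<^sub>0" "t\<^sub>0 \<le> t + \<tau>" by linarith
  then show "dist (?\<gamma> (t + \<tau>)) (F \<tau> (?\<gamma> t)) < \<epsilon>"
  proof cases
    case 1
    then show ?thesis
      using \<tau> t \<open>0 < \<epsilon>\<close> F_add[of \<tau> t] by (simp add: curve_append_def add.commute)
  next
    case 2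
    then have "t - t\<^sub>0 \<in> {0..T - \<tau>}"
      using t by auto
    then have "dist (\<gamma> (t - t\<^sub>0 + \<tau>)) (F \<tau> (\<gamma> (t - t\<^sub>0))) < \<epsilon>"
      using close \<tau> by (simp add: eps_close_def)
    then show ?thesis
      using 2 \<tau> by (simp add: curve_append_def algebra_simps)
  next
    case 3
    define \<sigma> where "\<sigma> = t + \<tau> - t\<^sub>0"
    \<comment> \<open>\<open>\<sigma> < 1\<close>, so past the jump at \<open>t\<^sub>0\<close> the curve is still on the orbit of \<open>\<gamma> 0\<close>.\<close>
    have \<sigma>: "0 \<le> \<sigma>" "\<sigma> < 1" "\<sigma> \<le> T"
      using 3 \<tau> t by (auto simp: \<sigma>_def)
    have "F \<tau> (F t x) = F \<sigma> (F t\<^sub>0 x)"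
      using F_add[of \<tau> t] F_add[of \<sigma> t\<^sub>0] \<sigma> \<tau> t \<open>0 \<le> t\<^sub>0\<close> by (simp add: \<sigma>_def algebra_simps)
    moreover have "\<gamma> \<sigma> = F \<sigma> (\<gamma> 0)"
      using orbit_start \<sigma> by blast
    ultimately show ?thesis
      using 3 jump[of \<sigma>] \<sigma> by (simp add: curve_append_def \<sigma>_def dist_commute)
  qed
qed

text \<open>The last clause, an exact orbit piece during the first unit of time, is the invariant
  that allows one more orbit piece to be prepended.\<close>
definition shadowing_curve ::
  "'a::metric_space set \<Rightarrow> (real \<Rightarrow> 'a \<Rightarrow> 'a) \<Rightarrow> real \<Rightarrow> real \<Rightarrow> (real \<Rightarrow> 'a) \<Rightarrow> bool" where
  "shadowing_curve X F \<epsilon> T \<gamma> \<longleftrightarrow>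
     (\<forall>t\<in>{0..T}. \<gamma> t \<in> X) \<and> piecewise_continuous T \<gamma> \<and> eps_close F \<epsilon> T \<gamma> \<and>
     (\<forall>\<sigma>. 0 \<le> \<sigma> \<and> \<sigma> < 1 \<and> \<sigma> \<le> T \<longrightarrow> \<gamma> \<sigma> = F \<sigma> (\<gamma> 0))"

lemma shadowing_curve_const:
  assumes "semiflow X F" "x \<in> X" "0 < \<epsilon>"
  shows "shadowing_curve X F \<epsilon> 0 (\<lambda>_. x)"
proof -
  have "F 0 x = x"
    using assms(1,2) by (simp add: semiflow_def)
  moreover have "eps_close F \<epsilon> 0 (\<lambda>_. x)"
    unfolding eps_close_def
  proof (intro ballI)
    fix \<tau> t :: real assume "\<tau> \<in> {0..1}" "t \<in> {0..0 - \<tau>}"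
    then have "\<tau> = 0"
      by simp
    then show "dist x (F \<tau> x) < \<epsilon>"
      using \<open>F 0 x = x\<close> \<open>0 < \<epsilon>\<close> by simp
  qed
  moreover have "\<forall>\<sigma>. 0 \<le> \<sigma> \<and> \<sigma> \<le> 0 \<longrightarrow> F \<sigma> x = x"
    using \<open>F 0 x = x\<close> by (metis order.antisym)
  ultimately show ?thesis
    using assms(2) by (auto simp: shadowing_curve_def piecewise_continuous_if_continuous_on)
qed

lemma shadowing_curve_prepend_orbit:
  assumes sf: "semiflow X F" and x: "x \<in> X" and t\<^sub>0: "1 \<le> t\<^sub>0" and "0 \<le> T" "0 < \<epsilon>"
    and \<gamma>: "shadowing_curve X F \<epsilon> T \<gamma>"
    and jump: "\<And>\<sigma>. \<sigma> \<in> {0..1} \<Longrightarrow> dist (F \<sigma> (F t\<^sub>0 x)) (F \<sigma> (\<gamma> 0)) < \<epsilon>"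
  shows "shadowing_curve X F \<epsilon> (t\<^sub>0 + T) (curve_append t\<^sub>0 (\<lambda>t. F t x) \<gamma>)"
proof -
  have F_in: "\<And>t. 0 \<le> t \<Longrightarrow> F t x \<in> X" and "F 0 x = x"
    using sf x by (auto simp: semiflow_def)
  have \<gamma>_in: "\<forall>t\<in>{0..T}. \<gamma> t \<in> X" and pc: "piecewise_continuous T \<gamma>"
    and close: "eps_close F \<epsilon> T \<gamma>"
    and orbit_start: "\<And>\<sigma>. 0 \<le> \<sigma> \<Longrightarrow> \<sigma> < 1 \<Longrightarrow> \<sigma> \<le> T \<Longrightarrow> \<gamma> \<sigma> = F \<sigma> (\<gamma> 0)"
    using \<gamma> unfolding shadowing_curve_def by blast+
  have "continuous_on {0..t\<^sub>0} (\<lambda>t. F t x)"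
    using semiflow_continuous_on_orbit[OF sf x] by (rule continuous_on_subset) auto
  then have "piecewise_continuous (t\<^sub>0 + T) (curve_append t\<^sub>0 (\<lambda>t. F t x) \<gamma>)"
    using t\<^sub>0 \<open>0 \<le> T\<close> pc
    by (intro piecewise_continuous_curve_append[OF _ _ piecewise_continuous_if_continuous_on]) auto
  moreover have "eps_close F \<epsilon> (t\<^sub>0 + T) (curve_append t\<^sub>0 (\<lambda>t. F t x) \<gamma>)"
    using t\<^sub>0 by (intro eps_close_prepend_orbit[OF sf x _ \<open>0 < \<epsilon>\<close> close orbit_start jump]) auto
  moreover have "\<forall>t\<in>{0..t\<^sub>0 + T}. curve_append t\<^sub>0 (\<lambda>t. F t x) \<gamma> t \<in> X"
    using \<gamma>_in F_in by (auto simp: curve_append_def)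
  moreover have "\<forall>\<sigma>. 0 \<le> \<sigma> \<and> \<sigma> < 1 \<and> \<sigma> \<le> t\<^sub>0 + T \<longrightarrow>
      curve_append t\<^sub>0 (\<lambda>t. F t x) \<gamma> \<sigma> = F \<sigma> (curve_append t\<^sub>0 (\<lambda>t. F t x) \<gamma> 0)"
    using t\<^sub>0 \<open>F 0 x = x\<close> by (simp add: curve_append_def)
  ultimately show ?thesis
    unfolding shadowing_curve_def by blast
qed

lemma shadowing_curve_of_chain:
  assumes sf: "semiflow X F" and "0 < \<epsilon>"
    and equicont: "\<And>\<sigma> a b. \<sigma> \<in> {0..1} \<Longrightarrow> a \<in> X \<Longrightarrow> b \<in> X \<Longrightarrow> dist a b < \<delta> \<Longrightarrow>
      dist (F \<sigma> a) (F \<sigma> b) < \<epsilon>"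
    and "\<forall>i\<le>n. xs i \<in> X" and "\<forall>i<n. 1 \<le> ts i \<and> dist (F (ts i) (xs i)) (xs (Suc i)) < \<delta>"
  shows "\<exists>T \<gamma>. real n \<le> T \<and> shadowing_curve X F \<epsilon> T \<gamma> \<and> \<gamma> 0 = xs 0 \<and> \<gamma> T = xs n"
  using assms(4,5)
proof (induction n arbitrary: xs ts)
  case 0
  then show ?case
    using shadowing_curve_const[OF sf _ \<open>0 < \<epsilon>\<close>] by auto
next
  case (Suc n)
  have "\<forall>i\<le>n. xs (Suc i) \<in> X"
    and "\<forall>i<n. 1 \<le> ts (Suc i) \<and> dist (F (ts (Suc i)) (xs (Suc i))) (xs (Suc (Suc i))) < \<delta>"
    using Suc.prems by auto
  from Suc.IH[OF this] obtain T \<gamma> where "real n \<le> T" and \<gamma>: "shadowing_curve X F \<epsilon> T \<gamma>"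
    and "\<gamma> 0 = xs 1" "\<gamma> T = xs (Suc n)"
    by (metis One_nat_def)
  have "xs 0 \<in> X" "xs 1 \<in> X" "1 \<le> ts 0" "dist (F (ts 0) (xs 0)) (xs 1) < \<delta>"
    using Suc.prems by auto
  moreover have "F (ts 0) (xs 0) \<in> X"
    using sf \<open>xs 0 \<in> X\<close> \<open>1 \<le> ts 0\<close> by (simp add: semiflow_def)
  ultimately have "shadowing_curve X F \<epsilon> (ts 0 + T) (curve_append (ts 0) (\<lambda>t. F t (xs 0)) \<gamma>)"
    using \<open>real n \<le> T\<close> \<open>\<gamma> 0 = xs 1\<close>
    by (intro shadowing_curve_prepend_orbit[OF sf _ _ _ \<open>0 < \<epsilon>\<close> \<gamma>] equicont) auto
  moreover have "curve_append (ts 0) (\<lambda>t. F t (xs 0)) \<gamma> 0 = xs 0"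
    using sf \<open>xs 0 \<in> X\<close> \<open>1 \<le> ts 0\<close> by (simp add: curve_append_def semiflow_def)
  moreover have "curve_append (ts 0) (\<lambda>t. F t (xs 0)) \<gamma> (ts 0 + T) = xs (Suc n)"
    using \<open>real n \<le> T\<close> \<open>\<gamma> T = xs (Suc n)\<close> by (simp add: curve_append_def)
  moreover have "real (Suc n) \<le> ts 0 + T"
    using \<open>1 \<le> ts 0\<close> \<open>real n \<le> T\<close> by simp
  ultimately show ?case
    by blast
qed

lemma conley_rel_imp_shadow_rel:
  assumes "compact X" "semiflow X F" "conley_rel X F x y"
  shows "shadow_rel X F x y"
  unfolding shadow_rel_def
proof (intro allI impI)
  fix \<epsilon> :: real assume "0 < \<epsilon>"
  obtain \<delta> where "0 < \<delta>" and equicont: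
    "\<And>\<sigma> a b. \<sigma> \<in> {0..1} \<Longrightarrow> a \<in> X \<Longrightarrow> b \<in> X \<Longrightarrow> dist a b < \<delta> \<Longrightarrow> dist (F \<sigma> a) (F \<sigma> b) < \<epsilon>"
    using semiflow_uniformly_equicontinuous[OF assms(1,2) \<open>0 < \<epsilon>\<close>, where \<tau> = 1] by blast
  have "conley_chain X F \<delta> 1 x y"
    using assms(3) \<open>0 < \<delta>\<close> by (simp add: conley_rel_def)
  then obtain N xs ts where "1 \<le> N" "xs 0 = x" "xs N = y" and chain: "\<forall>i\<le>N. xs i \<in> X"
    "\<forall>i<N. 1 \<le> ts i \<and> dist (F (ts i) (xs i)) (xs (Suc i)) < \<delta>"
    unfolding conley_chain_def by blast
  from shadowing_curve_of_chain[OF assms(2) \<open>0 < \<epsilon>\<close> equicont chain] obtain T \<gamma> where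
    "real N \<le> T" "shadowing_curve X F \<epsilon> T \<gamma>" "\<gamma> 0 = x" "\<gamma> T = y"
    using \<open>xs 0 = x\<close> \<open>xs N = y\<close> by blast
  with \<open>1 \<le> N\<close> show "shadow_chain X F \<epsilon> x y"
    unfolding shadow_chain_def shadowing_curve_def
    by (intro exI[of _ T] exI[of _ \<gamma>]) (auto intro: piecewise_cont_curveI)
qed

lemma chain_recurrent_set_mono:
  assumes "\<forall>x\<in>X. \<forall>y\<in>X. R x y \<longrightarrow> R' x y"
  shows "chain_recurrent_set X F R \<subseteq> chain_recurrent_set X F R'"
  using assms unfolding chain_recurrent_set_def by blast

theorem proposition3p2:
  fixes X :: "'a::metric_space set" and F :: "real \<Rightarrow> 'a \<Rightarrow> 'a"
  assumes "compact X" and "semiflow X F"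
  shows "(\<forall>x\<in>X. \<forall>y\<in>X. conley_rel X F x y \<longrightarrow> shadow_rel X F x y) \<and>
         chain_recurrent_set X F (conley_rel X F) \<subseteq> chain_recurrent_set X F (shadow_rel X F)"
proof -
  have "\<forall>x\<in>X. \<forall>y\<in>X. conley_rel X F x y \<longrightarrow> shadow_rel X F x y"
    using conley_rel_imp_shadow_rel[OF assms] by blast
  then show ?thesis
    using chain_recurrent_set_mono by blast
qed

end
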